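(* Fix a countable collection of languages $\mathcal{L}$, $c\in(0,1]$ and $\rho\in(0,1]$. Under enumerations with constant noise rate $c$ and arbitrary omissions, there exists a set-based generator that generates in the limit from $\mathcal{L}$ and achieves set-based lower density $\rho$ if and only if the following holds: for every non-empty finite subcollection $\mathcal{L}'\subseteq\mathcal{L}$ and every enumeration $x_{1:\infty}$, either (a) there exists $L'\in\mathcal{L}'$ with $R(L';x_{1:n})>c$ for infinitely many $n$, or (b) every $L\in\mathcal{L}'$ satisfies $\mu_{\rm low}\big(\bigcap_{L''\in\mathcal{L}'}L'',\,L\big)\ge\rho$.
   Context: The universe is $U=\mathbb{N}$ with its natural order. A language is an infinite subset of $U$; a collection is a countable family of languages. For $A,B\subseteq\mathbb{N}$ with $B=\{b_1<b_2<\cdots\}$, $\mu_{\rm low}(A,B)=\liminf_n\frac1n|A\cap\{b_1,\dots,b_n\}|$. An enumeration is a sequence of distinct elements of $U$; $S_n=\{x_1,\dots,x_n\}$; the empirical noise rate is $R(L;x_{1:n})=\frac1n|\{t\le n:x_t\notin L\}|$. An enumeration of $K$ with $c$-noise and arbitrary omissions is a sequence in which every element of some infinite $\hat K\subseteq K$ appears exactly once and $R(\hat K;x_{1:n})\le c$ for all sufficiently large $n$. A set-based generator is a sequence of maps that, given $x_1,\dots,x_n$ (and knowledge of $\mathcal{L}$, not of $K$), outputs $A_n\subseteq U\setminus S_n$. It generates in the limit if for every $K\in\mathcal{L}$ and admissible enumeration of $K$ there is $n^\star$ with $A_n\subseteq K$ for all $n\ge n^\star$; it achieves set-based lower density $\rho$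 if $\liminf_n\mu_{\rm low}(A_n,K)\ge\rho$ for every such $K$ and enumeration. *)

theory Defs
  imports Main "HOL-Library.Countable_Set" "HOL-Library.Infinite_Set" "HOL-Library.Extended_Real"
begin

text \<open>Universe U = nat. Enumerations are 0-indexed: x 0, x 1, ... stands for x_1, x_2, ...;
  the prefix x_{1:n} is x 0, ..., x (n-1).\<close>

definition language :: "nat set \<Rightarrow> bool" where
  "language L \<longleftrightarrow> infinite L"

definition collection :: "nat set set \<Rightarrow> bool" where
  "collection Lc \<longleftrightarrow> countable Lc \<and> (\<forall>L\<in>Lc. language L)"

definition enumeration :: "(nat \<Rightarrow> nat) \<Rightarrow> bool" where
  "enumeration x \<longleftrightarrow> inj x"

definition prefix_set :: "(nat \<Rightarrow> nat) \<Rightarrow> nat \<Rightarrow> nat set" where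
  "prefix_set x n = x ` {..<n}"

definition noise_rate :: "nat set \<Rightarrow> (nat \<Rightarrow> nat) \<Rightarrow> nat \<Rightarrow> real" where
  "noise_rate L x n = real (card {t. t < n \<and> x t \<notin> L}) / real n"

text \<open>Lower density of A in B = {b_1 < b_2 < ...} (B infinite); enumerate B i = b_{i+1}.\<close>
definition mu_low :: "nat set \<Rightarrow> nat set \<Rightarrow> ereal" where
  "mu_low A B = liminf (\<lambda>n. ereal (real (card (A \<inter> enumerate B ` {..<n})) / real n))"

definition noisy_enum :: "real \<Rightarrow> nat set \<Rightarrow> (nat \<Rightarrow> nat) \<Rightarrow> bool" where
  "noisy_enum c K x \<longleftrightarrow> enumeration x \<and>
     (\<exists>Kh. Kh \<subseteq> K \<and> infinite Kh \<and> Kh \<subseteq> range x \<and>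
        (\<forall>\<^sub>F n in sequentially. noise_rate Kh x n \<le> c))"

definition set_generator :: "(nat list \<Rightarrow> nat set) \<Rightarrow> bool" where
  "set_generator G \<longleftrightarrow> (\<forall>xs. G xs \<inter> set xs = {})"

definition gen_out :: "(nat list \<Rightarrow> nat set) \<Rightarrow> (nat \<Rightarrow> nat) \<Rightarrow> nat \<Rightarrow> nat set" where
  "gen_out G x n = G (map x [0..<n])"

definition generates_in_limit :: "nat set set \<Rightarrow> real \<Rightarrow> (nat list \<Rightarrow> nat set) \<Rightarrow> bool" where
  "generates_in_limit Lc c G \<longleftrightarrow>
     (\<forall>K\<in>Lc. \<forall>x. noisy_enum c K x \<longrightarrow> (\<exists>n0. \<forall>n\<ge>n0. gen_out G x n \<subseteq> K))"

definition achieves_lower_density :: "nat set set \<Rightarrow> real \<Rightarrow> real \<Rightarrow> (nat list \<Rightarrow> nat set) \<Rightarrow> bool" where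
  "achieves_lower_density Lc c \<rho> G \<longleftrightarrow>
     (\<forall>K\<in>Lc. \<forall>x. noisy_enum c K x \<longrightarrow> ereal \<rho> \<le> liminf (\<lambda>n. mu_low (gen_out G x n) K))"

end

theory Submission
  imports Defs "HOL-Analysis.Extended_Real_Limits"
begin

text \<open>Necessity: if the languages of a finite subcollection are each eventually consistent with
  the same enumeration, that enumeration (or, when \<open>c \<ge> 1\<close>, the identity) is a noisy
  enumeration of every one of them, so the generator's outputs eventually lie inside their
  intersection; density is monotone, hence the intersection inherits density \<open>\<rho>\<close>.

  Sufficiency: list the collection as \<open>f 0, f 1, \<dots>\<close>.  After \<open>n\<close> observations call index
  \<open>i \<le> t\<close> consistent at stage \<open>t\<close> if the noise rate of \<open>f i\<close> stays \<open>\<le> c\<close> at all times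
  \<open>t, \<dots>, n\<close>, and call the stage dense if the intersection of the consistent languages has
  lower density \<open>\<rho>\<close> in each of them.  The generator outputs that intersection for the latest
  dense stage.  For the target \<open>K = f z\<close> and a stage \<open>T\<close> beyond \<open>z\<close> and beyond the time
  after which \<open>K\<close> is consistent, the consistent indices at stage \<open>T\<close> eventually stabilise to
  those that are consistent forever; by the condition this stage is dense.  The latest dense
  stage is then at least \<open>T\<close>, so it still contains \<open>z\<close>: the output lies in \<open>K\<close> and has
  density \<open>\<rho>\<close> in \<open>K\<close>.  Removing the finitely many observed elements does not affect density.\<close>

lemma mu_low_mono:
  assumes "A \<subseteq> A'"
  shows "mu_low A B \<le> mu_low A' B"
  unfolding mu_low_def
proof (intro Liminf_mono always_eventually allI)
  fix n
  have "card (A \<inter> enumerate B ` {..<n}) \<le> card (A' \<inter> enumerate B ` {..<n})"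
    by (rule card_mono) (use assms in auto)
  then show "ereal (real (card (A \<inter> enumerate B ` {..<n})) / real n)
      \<le> ereal (real (card (A' \<inter> enumerate B ` {..<n})) / real n)"
    by (simp add: divide_right_mono)
qed

lemma mu_low_Diff_finite:
  assumes "finite F"
  shows "mu_low A B \<le> mu_low (A - F) B"
proof -
  let ?u = "\<lambda>n. ereal (real (card F) / real n)"
  let ?v = "\<lambda>n. ereal (real (card ((A - F) \<inter> enumerate B ` {..<n})) / real n)"
  have "mu_low A B \<le> liminf (\<lambda>n. ?u n + ?v n)"
    unfolding mu_low_def
  proof (intro Liminf_mono always_eventually allI)
    fix n
    have "card (A \<inter> enumerate B ` {..<n}) \<le> card (((A - F) \<inter> enumerate B ` {..<n}) \<union> F)"
      by (rule card_mono) (use assms in auto)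
    also have "\<dots> \<le> card ((A - F) \<inter> enumerate B ` {..<n}) + card F"
      by (rule card_Un_le)
    finally show "ereal (real (card (A \<inter> enumerate B ` {..<n})) / real n) \<le> ?u n + ?v n"
      by (simp add: add_divide_distrib[symmetric] divide_right_mono)
  qed
  also have "\<dots> = ereal 0 + liminf ?v"
    by (rule ereal_liminf_lim_add) (simp_all add: lim_const_over_n)
  finally show ?thesis
    by (simp add: mu_low_def zero_ereal_def[symmetric])
qed

lemma noise_rate_le_1: "noise_rate L x n \<le> 1"
proof -
  have "card {t. t < n \<and> x t \<notin> L} \<le> card {..<n}"
    by (rule card_mono) auto
  then show ?thesis
    unfolding noise_rate_def by (cases "n = 0") (auto simp: divide_le_eq_1)
qed

lemma noise_rate_cong:
  assumes "\<And>t. t < n \<Longrightarrow> y t = x t"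
  shows "noise_rate L y n = noise_rate L x n"
  unfolding noise_rate_def using assms by (metis (mono_tags, lifting) Collect_cong)

lemma noise_rate_antimono:
  assumes "L \<subseteq> L'"
  shows "noise_rate L' x n \<le> noise_rate L x n"
proof -
  have "card {t. t < n \<and> x t \<notin> L'} \<le> card {t. t < n \<and> x t \<notin> L}"
    by (rule card_mono) (use assms in auto)
  then show ?thesis
    unfolding noise_rate_def by (simp add: divide_right_mono)
qed

lemma not_frequently_less_iff_eventually_le:
  "(\<not> (\<exists>\<^sub>\<infinity>n. c < f n)) \<longleftrightarrow> (\<forall>\<^sub>F n in sequentially. f n \<le> (c :: real))"
  by (simp add: not_frequently not_less cofinite_eq_sequentially)

lemma noise_rate_ge_if_finite_Int_range:
  assumes "inj x" and "finite (L \<inter> range x)" and "0 < n"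
  shows "1 - real (card (L \<inter> range x)) / real n \<le> noise_rate L x n"
proof -
  let ?hits = "{t. t < n \<and> x t \<in> L}"
  have "card ?hits = card (x ` ?hits)"
    using \<open>inj x\<close> by (simp add: card_image inj_on_subset)
  also have "\<dots> \<le> card (L \<inter> range x)"
    by (rule card_mono) (use assms(2) in auto)
  finally have hits: "card ?hits \<le> card (L \<inter> range x)" .
  have "{t. t < n \<and> x t \<notin> L} = {..<n} - ?hits"
    by auto
  then have "card {t. t < n \<and> x t \<notin> L} = n - card ?hits"
    by (simp add: card_Diff_subset subset_eq)
  moreover have "card ?hits \<le> n"
    using card_mono[of "{..<n}" ?hits] by auto
  ultimately have "real n - real (card (L \<inter> range x)) \<le> real (card {t. t < n \<and> x t \<notin> L})"
    using hits by simp
  then have "(real n - real (card (L \<inter> range x))) / real n \<le> noise_rate L x n"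
    unfolding noise_rate_def by (rule divide_right_mono) simp
  then show ?thesis
    using \<open>0 < n\<close> by (simp add: diff_divide_distrib)
qed

lemma infinite_Int_range_if_eventually_noise_rate_le:
  assumes "c < 1" and "inj x" and "\<forall>\<^sub>F n in sequentially. noise_rate L x n \<le> c"
  shows "infinite (L \<inter> range x)"
proof
  assume fin: "finite (L \<inter> range x)"
  have "(\<lambda>n. 1 - real (card (L \<inter> range x)) / real n) \<longlonglongrightarrow> 1 - 0"
    by (intro tendsto_intros)
  then have "\<forall>\<^sub>F n in sequentially. c < 1 - real (card (L \<inter> range x)) / real n"
    using \<open>c < 1\<close> by (intro order_tendstoD) simp_all
  moreover have "\<forall>\<^sub>F n in sequentially. 0 < n"
    by (simp add: eventually_gt_at_top)
  ultimately have "\<forall>\<^sub>F n in sequentially. c < noise_rate L x n"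
  proof eventually_elim
    case (elim n)
    then show ?case
      using noise_rate_ge_if_finite_Int_range[OF \<open>inj x\<close> fin, of n] by linarith
  qed
  with assms(3) have "\<forall>\<^sub>F n in sequentially. False"
    by eventually_elim simp
  then show False
    by simp
qed

lemma noisy_enum_if_eventually_noise_rate_le:
  assumes "c < 1" and "enumeration x" and "\<forall>\<^sub>F n in sequentially. noise_rate L x n \<le> c"
  shows "noisy_enum c L x"
proof -
  have "noise_rate (L \<inter> range x) x n = noise_rate L x n" for n
    unfolding noise_rate_def by (rule arg_cong[where f = "\<lambda>A. real (card A) / real n"]) auto
  then show ?thesis
    using assms infinite_Int_range_if_eventually_noise_rate_le[of c x L]
    unfolding noisy_enum_def enumeration_def by (auto intro!: exI[of _ "L \<inter> range x"])
qed

lemma noisy_enum_id: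
  assumes "1 \<le> c" and "infinite L"
  shows "noisy_enum c L id"
  unfolding noisy_enum_def enumeration_def using assms
  by (auto intro!: exI[of _ L] always_eventually order_trans[OF noise_rate_le_1])

lemma noisy_enum_eventually_noise_rate_le:
  assumes "noisy_enum c K x"
  shows "\<forall>\<^sub>F n in sequentially. noise_rate K x n \<le> c"
proof -
  obtain Kh where "Kh \<subseteq> K" and Kh: "\<forall>\<^sub>F n in sequentially. noise_rate Kh x n \<le> c"
    using assms unfolding noisy_enum_def by blast
  from Kh show ?thesis
    by eventually_elim (rule order_trans[OF noise_rate_antimono[OF \<open>Kh \<subseteq> K\<close>]])
qed

lemma ex_common_noisy_enum:
  assumes "\<forall>L\<in>L'. infinite L" and "enumeration x"
    and "\<forall>L\<in>L'. \<forall>\<^sub>F n in sequentially. noise_rate L x n \<le> c"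
  shows "\<exists>x'. \<forall>L\<in>L'. noisy_enum c L x'"
proof (cases "c < 1")
  case True
  then show ?thesis
    using assms(2,3) by (intro exI[of _ x] ballI noisy_enum_if_eventually_noise_rate_le) simp_all
next
  case False
  then show ?thesis
    using assms(1) by (intro exI[of _ id] ballI noisy_enum_id) simp_all
qed

definition density_condition :: "nat set set \<Rightarrow> real \<Rightarrow> real \<Rightarrow> bool" where
  "density_condition Lc c \<rho> \<longleftrightarrow>
    (\<forall>L'. L' \<subseteq> Lc \<longrightarrow> finite L' \<longrightarrow> L' \<noteq> {} \<longrightarrow>
      (\<forall>x. enumeration x \<longrightarrow>
        (\<exists>La\<in>L'. \<exists>\<^sub>\<infinity>n. noise_rate La x n > c) \<or>
        (\<forall>L\<in>L'. mu_low (\<Inter>L') L \<ge> ereal \<rho>)))"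

lemma eventually_gen_out_subset_Inter:
  assumes "generates_in_limit Lc c G" and "finite L'" and "L' \<subseteq> Lc"
    and "\<forall>L\<in>L'. noisy_enum c L x"
  shows "\<forall>\<^sub>F n in sequentially. gen_out G x n \<subseteq> \<Inter>L'"
proof -
  have "\<forall>L\<in>L'. \<forall>\<^sub>F n in sequentially. gen_out G x n \<subseteq> L"
    using assms(1,3,4) unfolding generates_in_limit_def eventually_sequentially by blast
  then have "\<forall>\<^sub>F n in sequentially. \<forall>L\<in>L'. gen_out G x n \<subseteq> L"
    by (rule eventually_ball_finite[OF \<open>finite L'\<close>])
  then show ?thesis
    by (rule eventually_mono) blast
qed

lemma density_Inter_if_generator:
  assumes "collection Lc" and "generates_in_limit Lc c G" and "achieves_lower_density Lc c \<rho> G"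
    and "L' \<subseteq> Lc" and "finite L'" and "enumeration x"
    and "\<forall>La\<in>L'. \<forall>\<^sub>F n in sequentially. noise_rate La x n \<le> c" and "L \<in> L'"
  shows "ereal \<rho> \<le> mu_low (\<Inter>L') L"
proof -
  have "\<forall>La\<in>L'. infinite La"
    using assms(1,4) unfolding collection_def language_def by blast
  then obtain x' where x': "\<forall>La\<in>L'. noisy_enum c La x'"
    using ex_common_noisy_enum assms(6,7) by metis
  have "L \<in> Lc" and "noisy_enum c L x'"
    using assms(4,8) x' by auto
  then have "ereal \<rho> \<le> liminf (\<lambda>n. mu_low (gen_out G x' n) L)"
    using assms(3) unfolding achieves_lower_density_def by blast
  also have "\<dots> \<le> liminf (\<lambda>n. mu_low (\<Inter>L') L)"
  proof (rule Liminf_mono)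
    show "\<forall>\<^sub>F n in sequentially. mu_low (gen_out G x' n) L \<le> mu_low (\<Inter>L') L"
      using eventually_gen_out_subset_Inter[OF assms(2,5,4) x'] by eventually_elim (rule mu_low_mono)
  qed
  finally show ?thesis
    by (simp add: Liminf_const)
qed

lemma density_condition_if_generator:
  assumes "collection Lc" and "generates_in_limit Lc c G" and "achieves_lower_density Lc c \<rho> G"
  shows "density_condition Lc c \<rho>"
  unfolding density_condition_def
proof (intro allI impI)
  fix L' x
  assume "L' \<subseteq> Lc" and "finite L'" and "L' \<noteq> {}" and "enumeration x"
  show "(\<exists>La\<in>L'. \<exists>\<^sub>\<infinity>n. c < noise_rate La x n) \<or> (\<forall>L\<in>L'. ereal \<rho> \<le> mu_low (\<Inter>L') L)"
  proof (cases "\<exists>La\<in>L'. \<exists>\<^sub>\<infinity>n. c < noise_rate La x n")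
    case False
    then have "\<forall>La\<in>L'. \<forall>\<^sub>F n in sequentially. noise_rate La x n \<le> c"
      by (metis not_frequently_less_iff_eventually_le)
    then show ?thesis
      using density_Inter_if_generator[OF assms \<open>L' \<subseteq> Lc\<close> \<open>finite L'\<close> \<open>enumeration x\<close>] by blast
  qed simp
qed

definition consistent_indices :: "(nat \<Rightarrow> nat set) \<Rightarrow> real \<Rightarrow> (nat \<Rightarrow> nat) \<Rightarrow> nat \<Rightarrow> nat \<Rightarrow> nat set"
  where "consistent_indices f c x n t =
    {i. i \<le> t \<and> (\<forall>m. t \<le> m \<and> m \<le> n \<longrightarrow> noise_rate (f i) x m \<le> c)}"

definition dense_stage :: "(nat \<Rightarrow> nat set) \<Rightarrow> real \<Rightarrow> real \<Rightarrow> (nat \<Rightarrow> nat) \<Rightarrow> nat \<Rightarrow> nat \<Rightarrow> bool"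
  where "dense_stage f c \<rho> x n t \<longleftrightarrow>
    (\<forall>i\<in>consistent_indices f c x n t. ereal \<rho> \<le> mu_low (\<Inter>(f ` consistent_indices f c x n t)) (f i))"

text \<open>The output uses the latest dense stage \<open>t \<le> n\<close>; if there is none, \<open>Max {}\<close> is an
  unspecified stage, which is harmless because only large \<open>n\<close> matter.\<close>

definition intersection_generator :: "(nat \<Rightarrow> nat set) \<Rightarrow> real \<Rightarrow> real \<Rightarrow> nat list \<Rightarrow> nat set"
  where "intersection_generator f c \<rho> xs =
    (let x = (\<lambda>t. xs ! t); n = length xs
     in \<Inter>(f ` consistent_indices f c x n (Max {t. t \<le> n \<and> dense_stage f c \<rho> x n t})) - set xs)"

lemma set_generator_intersection_generator: "set_generator (intersection_generator f c \<rho>)"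
  unfolding set_generator_def intersection_generator_def Let_def by auto

lemma consistent_indices_mono: "t \<le> t' \<Longrightarrow> consistent_indices f c x n t \<subseteq> consistent_indices f c x n t'"
  unfolding consistent_indices_def by auto

lemma consistent_indices_prefix:
  "consistent_indices f c (\<lambda>t. map x [0..<n] ! t) n t = consistent_indices f c x n t"
proof -
  have "noise_rate L (\<lambda>t. map x [0..<n] ! t) m = noise_rate L x m" if "m \<le> n" for L m
    by (rule noise_rate_cong) (use that in auto)
  then show ?thesis
    unfolding consistent_indices_def by auto
qed

lemma gen_out_intersection_generator:
  "gen_out (intersection_generator f c \<rho>) x n =
    \<Inter>(f ` consistent_indices f c x n (Max {t. t \<le> n \<and> dense_stage f c \<rho> x n t})) - x ` {..<n}"
  unfolding gen_out_def intersection_generator_def Let_def dense_stage_def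
  by (simp add: consistent_indices_prefix atLeast0LessThan)

lemma gen_out_intersection_generator_correct:
  assumes "T \<le> n" and "z \<in> consistent_indices f c x n T" and "dense_stage f c \<rho> x n T"
  shows "gen_out (intersection_generator f c \<rho>) x n \<subseteq> f z
    \<and> ereal \<rho> \<le> mu_low (gen_out (intersection_generator f c \<rho>) x n) (f z)"
proof -
  define t where "t = Max {t. t \<le> n \<and> dense_stage f c \<rho> x n t}"
  have fin: "finite {t. t \<le> n \<and> dense_stage f c \<rho> x n t}"
    by simp
  have T: "T \<in> {t. t \<le> n \<and> dense_stage f c \<rho> x n t}"
    using assms(1,3) by simp
  have "t \<in> {t. t \<le> n \<and> dense_stage f c \<rho> x n t}" and "T \<le> t"
    unfolding t_def using Max_in[OF fin] Max_ge[OF fin T] T by blast+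
  then have dense: "dense_stage f c \<rho> x n t" and z: "z \<in> consistent_indices f c x n t"
    using consistent_indices_mono assms(2) by blast+
  have out: "gen_out (intersection_generator f c \<rho>) x n = \<Inter>(f ` consistent_indices f c x n t) - x ` {..<n}"
    unfolding gen_out_intersection_generator t_def ..
  have "ereal \<rho> \<le> mu_low (\<Inter>(f ` consistent_indices f c x n t)) (f z)"
    using dense z unfolding dense_stage_def by blast
  also have "\<dots> \<le> mu_low (gen_out (intersection_generator f c \<rho>) x n) (f z)"
    unfolding out by (rule mu_low_Diff_finite) simp
  finally show ?thesis
    unfolding out using z by blast
qed

lemma eventually_all_between_iff_all:
  "\<forall>\<^sub>F n in sequentially. (\<forall>m. T \<le> m \<and> m \<le> n \<longrightarrow> P m) \<longleftrightarrow> (\<forall>m\<ge>T. P m)"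
proof (cases "\<forall>m\<ge>T. P m")
  case False
  then obtain m0 where "T \<le> m0" and "\<not> P m0"
    by blast
  then show ?thesis
    by (intro eventually_mono[OF eventually_ge_at_top[of m0]]) auto
qed simp

lemma consistent_indices_eventually_eq:
  "\<forall>\<^sub>F n in sequentially.
    consistent_indices f c x n T = {i. i \<le> T \<and> (\<forall>m\<ge>T. noise_rate (f i) x m \<le> c)}"
proof -
  have "\<forall>\<^sub>F n in sequentially. \<forall>i\<in>{..T}.
      (\<forall>m. T \<le> m \<and> m \<le> n \<longrightarrow> noise_rate (f i) x m \<le> c) \<longleftrightarrow> (\<forall>m\<ge>T. noise_rate (f i) x m \<le> c)"
    by (intro eventually_ball_finite ballI eventually_all_between_iff_all) simp
  then show ?thesis
    by eventually_elim (auto simp: consistent_indices_def)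
qed

lemma intersection_generator_eventually_correct:
  assumes "density_condition (range f) c \<rho>" and "noisy_enum c (f z) x"
  shows "\<forall>\<^sub>F n in sequentially. gen_out (intersection_generator f c \<rho>) x n \<subseteq> f z
    \<and> ereal \<rho> \<le> mu_low (gen_out (intersection_generator f c \<rho>) x n) (f z)"
proof -
  obtain N where N: "\<And>n. N \<le> n \<Longrightarrow> noise_rate (f z) x n \<le> c"
    using noisy_enum_eventually_noise_rate_le[OF assms(2)] unfolding eventually_sequentially by blast
  define T where "T = max z N"
  define F where "F = {i. i \<le> T \<and> (\<forall>m\<ge>T. noise_rate (f i) x m \<le> c)}"
  have "z \<in> F"
    unfolding F_def T_def using N by auto
  have "\<forall>La\<in>f ` F. \<forall>\<^sub>F n in sequentially. noise_rate La x n \<le> c"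
    unfolding F_def eventually_sequentially by blast
  then have "\<not> (\<exists>La\<in>f ` F. \<exists>\<^sub>\<infinity>n. c < noise_rate La x n)"
    by (metis not_frequently_less_iff_eventually_le)
  moreover have "f ` F \<subseteq> range f" and "finite (f ` F)" and "f ` F \<noteq> {}" and "enumeration x"
    using \<open>z \<in> F\<close> assms(2) unfolding F_def noisy_enum_def by auto
  ultimately have dense: "\<forall>i\<in>F. ereal \<rho> \<le> mu_low (\<Inter>(f ` F)) (f i)"
    using assms(1) unfolding density_condition_def by blast
  have "\<forall>\<^sub>F n in sequentially. consistent_indices f c x n T = F"
    unfolding F_def by (rule consistent_indices_eventually_eq)
  then show ?thesis
    using eventually_ge_at_top[of T]
  proof eventually_elim
    case (elim n)
    then show ?case
      using \<open>z \<in> F\<close> dense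
      by (intro gen_out_intersection_generator_correct[of T]) (simp_all add: dense_stage_def)
  qed
qed

lemma generator_if_density_condition:
  assumes "collection Lc" and "density_condition Lc c \<rho>"
  shows "\<exists>G. set_generator G \<and> generates_in_limit Lc c G \<and> achieves_lower_density Lc c \<rho> G"
proof (cases "Lc = {}")
  case True
  then show ?thesis
    by (auto simp: set_generator_def generates_in_limit_def achieves_lower_density_def)
next
  case False
  define f where "f = from_nat_into Lc"
  have range_f: "range f = Lc"
    unfolding f_def using range_from_nat_into[OF False] assms(1) unfolding collection_def by blast
  have correct: "\<forall>\<^sub>F n in sequentially. gen_out (intersection_generator f c \<rho>) x n \<subseteq> K
      \<and> ereal \<rho> \<le> mu_low (gen_out (intersection_generator f c \<rho>) x n) K"
    if "K \<in> Lc" and "noisy_enum c K x" for K x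
    using that intersection_generator_eventually_correct[of f c \<rho>] assms(2) range_f by auto
  have "generates_in_limit Lc c (intersection_generator f c \<rho>)"
    unfolding generates_in_limit_def
  proof (intro ballI allI impI)
    fix K x
    assume "K \<in> Lc" and "noisy_enum c K x"
    then show "\<exists>n0. \<forall>n\<ge>n0. gen_out (intersection_generator f c \<rho>) x n \<subseteq> K"
      using correct unfolding eventually_sequentially by blast
  qed
  moreover have "achieves_lower_density Lc c \<rho> (intersection_generator f c \<rho>)"
    unfolding achieves_lower_density_def
  proof (intro ballI allI impI)
    fix K x
    assume "K \<in> Lc" and "noisy_enum c K x"
    from correct[OF this]
    have "\<forall>\<^sub>F n in sequentially. ereal \<rho> \<le> mu_low (gen_out (intersection_generator f c \<rho>) x n) K"
      by eventually_elim simp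
    then show "ereal \<rho> \<le> liminf (\<lambda>n. mu_low (gen_out (intersection_generator f c \<rho>) x n) K)"
      by (rule Liminf_bounded)
  qed
  ultimately show ?thesis
    using set_generator_intersection_generator by blast
qed

theorem theorem6p14:
  fixes Lc :: "nat set set" and c \<rho> :: real
  assumes "collection Lc"
    and "0 < c" and "c \<le> 1" and "0 < \<rho>" and "\<rho> \<le> 1"
  shows "(\<exists>G. set_generator G \<and> generates_in_limit Lc c G \<and> achieves_lower_density Lc c \<rho> G)
    \<longleftrightarrow>
    (\<forall>L'. L' \<subseteq> Lc \<longrightarrow> finite L' \<longrightarrow> L' \<noteq> {} \<longrightarrow>
      (\<forall>x. enumeration x \<longrightarrow>
        (\<exists>La\<in>L'. \<exists>\<^sub>\<infinity>n. noise_rate La x n > c) \<or>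
        (\<forall>L\<in>L'. mu_low (\<Inter>L') L \<ge> ereal \<rho>)))"
  unfolding density_condition_def[symmetric]
proof
  assume "\<exists>G. set_generator G \<and> generates_in_limit Lc c G \<and> achieves_lower_density Lc c \<rho> G"
  then show "density_condition Lc c \<rho>"
    using density_condition_if_generator[OF \<open>collection Lc\<close>] by blast
qed (rule generator_if_density_condition[OF \<open>collection Lc\<close>])

end
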